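(* Fix $0<B<1$ and $H>0$, let $x(s),z(s)$ be as follows: $$x(s)=\frac1H\sqrt{1+B^2+2B\sin\!\big(Hs+\tfrac{3\pi}{2}\big)},\qquad z(s)=\int_{3\pi/(2H)}^{\,s+3\pi/(2H)}\frac{1+B\sin(Ht)}{\sqrt{1+B^2+2B\sin(Ht)}}\,dt ,$$ let $s_0=\frac1H\arccos B$ be the smallest positive zero of $x''$, let $g(s)=x(s)-\frac{x'(s)}{z'(s)}z(s)$, and set $z_0=\frac{1-B^2}{HB}$. Then: (i) if $z(s_0)<z_0$, then $g(s)>0$ for all $s\in(0,s_0)$; (ii) if $z(s_0)\ge z_0$, then there is $\bar s\in(0,s_0]$ with $g(\bar s)=g(-\bar s)=0$; with $R_0^2=x(\bar s)^2+z(\bar s)^2$, the surface $\Sigma$ obtained by rotating $\beta|_{[-\bar s,\bar s]}$, $\beta=(x,0,z)$, about the $z$-axis is a free boundary CMC annulus in the ball $\mathbb B^3_{R_0}$ of radius $R_0$ centered at the origin, and it satisfies, at every point, $$|\Phi|^2\langle\vec x,N\rangle^2\le\tfrac12\big(2+H\langle\vec x,N\rangle\big)^2,$$ with $N=(-z'\cos\theta,-z'\sin\theta,x')$ at the point $(x(s)\cos\theta,x(s)\sin\theta,z(s))$.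
   Context: Free boundary in a ball $\mathbb B^3_{R}$: interior in the open ball, boundary on the sphere of radius $R$, meeting it orthogonally. Conventions: shape operator $A$ w.r.t. $N$ defined by $\langle A(Y),Z\rangle=\langle\bar\nabla_YZ,N\rangle$; mean curvature $H=\operatorname{tr}A$ (unnormalized; for this unduloid it equals the constant $H$); $\Phi=\Pi-\frac H2g_\Sigma$, $|\Phi|^2=|A|^2-H^2/2$; $\vec x$ the position vector. *)

theory Defs
  imports "HOL-Analysis.Analysis"
begin

type_synonym psurf = "real \<times> real \<Rightarrow> real^3"

definition dS :: "psurf \<Rightarrow> psurf" where
  "dS X = (\<lambda>(s,t). vector_derivative (\<lambda>u. X (u,t)) (at s))"
definition dT :: "psurf \<Rightarrow> psurf" where
  "dT X = (\<lambda>(s,t). vector_derivative (\<lambda>u. X (s,u)) (at t))"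

definition C2_at :: "psurf \<Rightarrow> real \<times> real \<Rightarrow> bool" where
  "C2_at X p \<longleftrightarrow>
     (\<forall>Y\<in>{X, dS X, dT X}.
        (\<lambda>u. Y (u, snd p)) differentiable (at (fst p)) \<and>
        (\<lambda>u. Y (fst p, u)) differentiable (at (snd p)))"

definition fE where "fE X p = dS X p \<bullet> dS X p"
definition fF where "fF X p = dS X p \<bullet> dT X p"
definition fG where "fG X p = dT X p \<bullet> dT X p"

text \<open>Second fundamental form w.r.t. the normal field N, with the convention
  <A(Y),Z> = <Dbar_Y Z, N>.\<close>
definition sffL where "sffL X N p = dS (dS X) p \<bullet> N p"
definition sffM where "sffM X N p = dT (dS X) p \<bullet> N p"
definition sffN where "sffN X N p = dT (dT X) p \<bullet> N p"

text \<open>Entries of the shape operator S = I^{-1} II (in the coordinate frame).\<close>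
definition shapeop :: "psurf \<Rightarrow> psurf \<Rightarrow> real \<times> real \<Rightarrow> nat \<Rightarrow> nat \<Rightarrow> real" where
  "shapeop X N p i j =
    (let E = fE X p; F = fF X p; G = fG X p;
         l = sffL X N p; m = sffM X N p; n = sffN X N p; D = E*G - F^2 in
     if i = 1 \<and> j = 1 then (G*l - F*m)/D
     else if i = 1 \<and> j = 2 then (G*m - F*n)/D
     else if i = 2 \<and> j = 1 then (E*m - F*l)/D
     else (E*n - F*m)/D)"

text \<open>Unnormalized mean curvature H = tr A.\<close>
definition mean_curv :: "psurf \<Rightarrow> psurf \<Rightarrow> real \<times> real \<Rightarrow> real" where
  "mean_curv X N p = shapeop X N p 1 1 + shapeop X N p 2 2"

text \<open>|A|^2 = tr (A^2).\<close>
definition normA_sq :: "psurf \<Rightarrow> psurf \<Rightarrow> real \<times> real \<Rightarrow> real" where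
  "normA_sq X N p = (shapeop X N p 1 1)^2 + 2 * shapeop X N p 1 2 * shapeop X N p 2 1
                    + (shapeop X N p 2 2)^2"

definition Phi_sq :: "psurf \<Rightarrow> psurf \<Rightarrow> real \<times> real \<Rightarrow> real" where
  "Phi_sq X N p = normA_sq X N p - (mean_curv X N p)^2 / 2"

text \<open>X restricted to [a,b] x R, 2pi-periodic in theta, is an embedded annulus
  (injective on [a,b] x [0,2pi), hence a homeomorphism of [a,b] x S^1 onto its image),
  immersed and C^2, with unit normal field N, with constant mean curvature H,
  and free boundary in the ball of radius R centred at 0: interior in the open ball,
  boundary on the sphere, meeting it orthogonally.\<close>
definition free_boundary_CMC_annulus ::
  "psurf \<Rightarrow> psurf \<Rightarrow> real \<Rightarrow> real \<Rightarrow> real \<Rightarrow> real \<Rightarrow> bool" where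
  "free_boundary_CMC_annulus X N H a b R \<longleftrightarrow>
     a < b \<and> R > 0 \<and>
     (\<forall>s t. X (s, t + 2*pi) = X (s, t)) \<and>
     inj_on X ({a..b} \<times> {0..<2*pi}) \<and>
     (\<forall>s\<in>{a..b}. \<forall>t.
        C2_at X (s,t) \<and>
        cross3 (dS X (s,t)) (dT X (s,t)) \<noteq> 0 \<and>
        norm (N (s,t)) = 1 \<and> N (s,t) \<bullet> dS X (s,t) = 0 \<and> N (s,t) \<bullet> dT X (s,t) = 0 \<and>
        mean_curv X N (s,t) = H) \<and>
     (\<forall>s\<in>{a<..<b}. \<forall>t. norm (X (s,t)) < R) \<and>
     (\<forall>s\<in>{a,b}. \<forall>t. norm (X (s,t)) = R \<and> X (s,t) \<bullet> N (s,t) = 0)"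

definition ux :: "real \<Rightarrow> real \<Rightarrow> real \<Rightarrow> real" where
  "ux B H s = (1/H) * sqrt (1 + B^2 + 2*B* sin (H* s + 3*pi/2))"

definition uz_integrand :: "real \<Rightarrow> real \<Rightarrow> real \<Rightarrow> real" where
  "uz_integrand B H t = (1 + B* sin (H * t)) / sqrt (1 + B^2 + 2*B* sin (H * t))"

definition uz :: "real \<Rightarrow> real \<Rightarrow> real \<Rightarrow> real" where
  "uz B H s = (let c = 3*pi/(2*H) in
     if 0 \<le> s then integral {c..s+c} (uz_integrand B H)
     else - integral {s+c..c} (uz_integrand B H))"

definition ug :: "real \<Rightarrow> real \<Rightarrow> real \<Rightarrow> real" where
  "ug B H s = ux B H s - deriv (ux B H) s / deriv (uz B H) s * uz B H s"

definition rot_surf :: "(real \<Rightarrow> real) \<Rightarrow> (real \<Rightarrow> real) \<Rightarrow> psurf" where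
  "rot_surf x z = (\<lambda>(s,t). vector [x s * cos t, x s * sin t, z s])"

definition rot_normal :: "(real \<Rightarrow> real) \<Rightarrow> (real \<Rightarrow> real) \<Rightarrow> psurf" where
  "rot_normal x z = (\<lambda>(s,t). vector [- deriv z s * cos t, - deriv z s * sin t, deriv x s])"

end

theory Submission
  imports Defs
begin

(* For a unit-speed profile (x, z) the surface of revolution has principal curvatures
   k1 = z''x' - x''z' along meridians and k2 = z'/x along parallels, so the mean curvature is
   k1 + k2 and |Phi|^2 = (k1 - k2)^2 / 2.  For the unduloid, with D = 1 + B^2 - 2B cos(Hs) = (Hx)^2,
   these are BH(B - cos Hs)/D and H(1 - B cos Hs)/D, which add up to H.

   The support function phi = x z' - x' z = -<X, N> equals z' g and has derivative x z'' - x'' z,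
   which is negative on (0, s0) because there x'' > 0 > z'' and x, z > 0.  Hence phi decreases
   from phi(0) = (1 - B)/H to phi(s0) = (1 - B^2)/H - B z(s0), whose sign is that of z0 - z(s0).
   In case (ii) the intermediate value theorem gives a zero sb of phi; as x^2 + z^2 increases on
   (0, s0), the annulus lies inside the sphere through its boundary circles, which it meets
   orthogonally because <X, N> = 0 there.  Finally 0 <= H phi <= 1 - B on [-sb, sb] and
   D >= (1 - B)^2 give the pinching estimate. *)

lemma vector3_has_vector_derivative:
  assumes "(a has_real_derivative a') (at s)" "(b has_real_derivative b') (at s)"
    and "(c has_real_derivative c') (at s)"
  shows "((\<lambda>u. vector [a u, b u, c u] :: real^3) has_vector_derivative vector [a', b', c']) (at s)"
proof -
  have decomp: "(vector [p, q, r] :: real^3) = p *\<^sub>R axis 1 1 + q *\<^sub>R axis 2 1 + r *\<^sub>R axis 3 1"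
    for p q r :: real
    by (simp add: vec_eq_iff forall_3 axis_def)
  show ?thesis
    unfolding decomp using assms by (auto intro!: derivative_eq_intros)
qed

lemma vector_derivative_vector3:
  "(a has_real_derivative a') (at s) \<Longrightarrow> (b has_real_derivative b') (at s) \<Longrightarrow>
   (c has_real_derivative c') (at s) \<Longrightarrow>
   vector_derivative (\<lambda>u. vector [a u, b u, c u] :: real^3) (at s) = vector [a', b', c']"
  by (rule vector_derivative_at[OF vector3_has_vector_derivative])

lemma inner_vector3: "(vector [a, b, c] :: real^3) \<bullet> vector [d, e, f] = a*d + b*e + c*f"
  by (simp add: inner_vec_def sum_3)

lemma norm_vector3: "norm (vector [a, b, c] :: real^3) = sqrt (a^2 + b^2 + c^2)"
  by (simp add: norm_eq_sqrt_inner inner_vector3 power2_eq_square)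

lemma cross3_vector3:
  "cross3 (vector [a, b, c]) (vector [d, e, f]) = vector [b*f - c*e, c*d - a*f, a*e - b*d]"
  by (simp add: cross3_def)

lemma vector3_eq_0_iff: "(vector [a, b, c] :: real^3) = 0 \<longleftrightarrow> a = 0 \<and> b = 0 \<and> c = 0"
  by (auto simp: vec_eq_iff forall_3)

lemma rot_surf_periodic: "rot_surf x z (s, t + 2*pi) = rot_surf x z (s, t)"
  by (simp add: rot_surf_def)

locale unit_speed_profile =
  fixes x z x' z' x'' z'' :: "real \<Rightarrow> real"
  assumes x_deriv: "\<And>s. (x has_real_derivative x' s) (at s)"
    and z_deriv: "\<And>s. (z has_real_derivative z' s) (at s)"
    and x'_deriv: "\<And>s. (x' has_real_derivative x'' s) (at s)"
    and z'_deriv: "\<And>s. (z' has_real_derivative z'' s) (at s)"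
    and unit_speed: "\<And>s. (x' s)^2 + (z' s)^2 = 1"
    and x_pos: "\<And>s. x s > 0"
begin

definition meridian_curvature :: "real \<Rightarrow> real"
  where "meridian_curvature s = z'' s * x' s - x'' s * z' s"

definition parallel_curvature :: "real \<Rightarrow> real"
  where "parallel_curvature s = z' s / x s"

definition support :: "real \<Rightarrow> real"
  where "support s = x s * z' s - x' s * z s"

lemmas profile_derivs = derivative_eq_intros x_deriv z_deriv x'_deriv z'_deriv

lemma dS_rot_surf: "dS (rot_surf x z) = (\<lambda>(s,t). vector [x' s * cos t, x' s * sin t, z' s])"
  unfolding dS_def rot_surf_def by (auto intro!: vector_derivative_vector3 profile_derivs)

lemma dT_rot_surf: "dT (rot_surf x z) = (\<lambda>(s,t). vector [- (x s * sin t), x s * cos t, 0])"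
  unfolding dT_def rot_surf_def by (auto intro!: vector_derivative_vector3 profile_derivs)

lemma dS_dS_rot_surf:
  "dS (dS (rot_surf x z)) = (\<lambda>(s,t). vector [x'' s * cos t, x'' s * sin t, z'' s])"
  unfolding dS_rot_surf unfolding dS_def by (auto intro!: vector_derivative_vector3 profile_derivs)

lemma dT_dS_rot_surf:
  "dT (dS (rot_surf x z)) = (\<lambda>(s,t). vector [- (x' s * sin t), x' s * cos t, 0])"
  unfolding dS_rot_surf unfolding dT_def by (auto intro!: vector_derivative_vector3 profile_derivs)

lemma dT_dT_rot_surf:
  "dT (dT (rot_surf x z)) = (\<lambda>(s,t). vector [- (x s * cos t), - (x s * sin t), 0])"
  unfolding dT_rot_surf unfolding dT_def by (auto intro!: vector_derivative_vector3 profile_derivs)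

lemma rot_normal_eq:
  "rot_normal x z = (\<lambda>(s,t). vector [- (z' s * cos t), - (z' s * sin t), x' s])"
  unfolding rot_normal_def using DERIV_imp_deriv[OF x_deriv] DERIV_imp_deriv[OF z_deriv] by auto

lemma C2_at_rot_surf: "C2_at (rot_surf x z) p"
  unfolding C2_at_def dS_rot_surf dT_rot_surf
  by (cases p) (auto simp: rot_surf_def
      intro!: differentiableI_vector[OF vector3_has_vector_derivative] profile_derivs)

lemma fundamental_forms_rot_surf:
  "fE (rot_surf x z) (s,t) = 1" "fF (rot_surf x z) (s,t) = 0" "fG (rot_surf x z) (s,t) = (x s)^2"
  "sffL (rot_surf x z) (rot_normal x z) (s,t) = meridian_curvature s"
  "sffM (rot_surf x z) (rot_normal x z) (s,t) = 0"
  "sffN (rot_surf x z) (rot_normal x z) (s,t) = x s * z' s"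
proof -
  have cs: "(cos t)^2 = 1 - (sin t)^2" by (simp add: cos_squared_eq)
  show "fE (rot_surf x z) (s,t) = 1"
    using unit_speed[of s] cs by (simp add: fE_def dS_rot_surf inner_vector3) algebra
  show "fF (rot_surf x z) (s,t) = 0"
    by (simp add: fF_def dS_rot_surf dT_rot_surf inner_vector3 algebra_simps)
  show "fG (rot_surf x z) (s,t) = (x s)^2"
    using cs by (simp add: fG_def dT_rot_surf inner_vector3) algebra
  show "sffL (rot_surf x z) (rot_normal x z) (s,t) = meridian_curvature s"
    using cs by (simp add: sffL_def dS_dS_rot_surf rot_normal_eq inner_vector3 meridian_curvature_def) algebra
  show "sffM (rot_surf x z) (rot_normal x z) (s,t) = 0"
    by (simp add: sffM_def dT_dS_rot_surf rot_normal_eq inner_vector3 algebra_simps)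
  show "sffN (rot_surf x z) (rot_normal x z) (s,t) = x s * z' s"
    using cs by (simp add: sffN_def dT_dT_rot_surf rot_normal_eq inner_vector3) algebra
qed

lemma shapeop_rot_surf:
  "shapeop (rot_surf x z) (rot_normal x z) (s,t) 1 1 = meridian_curvature s"
  "shapeop (rot_surf x z) (rot_normal x z) (s,t) 1 2 = 0"
  "shapeop (rot_surf x z) (rot_normal x z) (s,t) 2 1 = 0"
  "shapeop (rot_surf x z) (rot_normal x z) (s,t) 2 2 = parallel_curvature s"
  unfolding shapeop_def Let_def fundamental_forms_rot_surf parallel_curvature_def
  using x_pos[of s] by (simp_all add: power2_eq_square)

lemma mean_curv_rot_surf:
  "mean_curv (rot_surf x z) (rot_normal x z) (s,t) = meridian_curvature s + parallel_curvature s"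
  unfolding mean_curv_def shapeop_rot_surf ..

lemma Phi_sq_rot_surf:
  "Phi_sq (rot_surf x z) (rot_normal x z) (s,t) = (meridian_curvature s - parallel_curvature s)^2 / 2"
  unfolding Phi_sq_def normA_sq_def mean_curv_rot_surf shapeop_rot_surf
  by (simp add: power2_eq_square field_simps)

lemma norm_rot_normal: "norm (rot_normal x z (s,t)) = 1"
proof -
  have "(z' s * cos t)^2 + (z' s * sin t)^2 + (x' s)^2 = 1"
    using unit_speed[of s] cos_squared_eq[of t] by algebra
  then show ?thesis by (simp add: rot_normal_eq norm_vector3)
qed

lemma rot_normal_orthogonal:
  "rot_normal x z (s,t) \<bullet> dS (rot_surf x z) (s,t) = 0"
  "rot_normal x z (s,t) \<bullet> dT (rot_surf x z) (s,t) = 0"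
proof -
  show "rot_normal x z (s,t) \<bullet> dS (rot_surf x z) (s,t) = 0"
    unfolding rot_normal_eq dS_rot_surf
    by (simp add: inner_vector3) (use sin_cos_squared_add3[of t] in algebra)
  show "rot_normal x z (s,t) \<bullet> dT (rot_surf x z) (s,t) = 0"
    by (simp add: rot_normal_eq dT_rot_surf inner_vector3 algebra_simps)
qed

lemma cross3_rot_surf_nonzero: "cross3 (dS (rot_surf x z) (s,t)) (dT (rot_surf x z) (s,t)) \<noteq> 0"
proof
  assume "cross3 (dS (rot_surf x z) (s,t)) (dT (rot_surf x z) (s,t)) = 0"
  then have "x s * x' s = 0" "x s * z' s = 0"
    by (simp_all add: dS_rot_surf dT_rot_surf cross3_vector3 vector3_eq_0_iff)
      (use cos_squared_eq[of t] in algebra)+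
  then show False using unit_speed[of s] x_pos[of s] by simp
qed

lemma inner_rot_surf_rot_normal: "rot_surf x z (s,t) \<bullet> rot_normal x z (s,t) = - support s"
  by (simp add: rot_surf_def rot_normal_eq support_def inner_vector3)
    (use cos_squared_eq[of t] in algebra)

lemma norm_rot_surf: "norm (rot_surf x z (s,t)) = sqrt ((x s)^2 + (z s)^2)"
proof -
  have "(x s * cos t)^2 + (x s * sin t)^2 + (z s)^2 = (x s)^2 + (z s)^2"
    using cos_squared_eq[of t] by algebra
  then show ?thesis by (simp add: rot_surf_def norm_vector3)
qed

lemma inj_on_rot_surf:
  assumes "inj z"
  shows "inj_on (rot_surf x z) (S \<times> {0..<2*pi})"
proof (rule inj_onI, clarify)
  fix s t s' t'
  assume t: "t \<in> {0..<2*pi}" "t' \<in> {0..<2*pi}" and eq: "rot_surf x z (s,t) = rot_surf x z (s',t')"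
  then have "x s * cos t = x s' * cos t'" "x s * sin t = x s' * sin t'" "z s = z s'"
    by (simp_all add: rot_surf_def vec_eq_iff forall_3)
  moreover from this have "s = s'" using assms by (simp add: inj_eq)
  ultimately have "cos t = cos t'" "sin t = sin t'" using x_pos[of s] by simp_all
  then obtain n :: int where n: "t = t' + 2 * pi * n" using sin_cos_eq_iff by metis
  moreover from t have "0 \<le> t" "t < 2*pi" "0 \<le> t'" "t' < 2*pi" by auto
  ultimately have "pi * (-1) < pi * n" "pi * n < pi * 1" by linarith+
  then have "-1 < n" "n < 1"
    using mult_less_cancel_left_pos[OF pi_gt_zero] by (metis of_int_less_iff of_int_minus of_int_1)+
  then show "s = s' \<and> t = t'" using \<open>s = s'\<close> n by simp
qed

lemma support_deriv: "(support has_real_derivative x s * z'' s - x'' s * z s) (at s)"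
  unfolding support_def[abs_def] by (rule profile_derivs refl | simp add: algebra_simps)+

lemma continuous_on_support: "continuous_on S support"
  using support_deriv by (meson DERIV_continuous continuous_at_imp_continuous_on)

lemma radius_sq_deriv:
  "((\<lambda>s. (x s)^2 + (z s)^2) has_real_derivative 2 * (x s * x' s + z s * z' s)) (at s)"
  by (rule profile_derivs refl | simp add: algebra_simps)+

lemma continuous_on_radius_sq: "continuous_on S (\<lambda>s. (x s)^2 + (z s)^2)"
  using radius_sq_deriv by (meson DERIV_continuous continuous_at_imp_continuous_on)

end

lemma sin_add_3pi_half: "sin (y + 3*pi/2) = - cos y"
proof -
  have "3*pi/2 = pi/2 + pi" by simp
  then show ?thesis by (simp only: sin_add sin_periodic_pi cos_periodic_pi sin_pi_half cos_pi_half) simp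
qed

lemma oriented_integral_has_real_derivative:
  fixes f :: "real \<Rightarrow> real"
  assumes f: "continuous_on UNIV f"
  shows "((\<lambda>s. if 0 \<le> s then integral {c..s+c} f else - integral {s+c..c} f)
           has_real_derivative f (s + c)) (at s)"
proof -
  define a where "a = min c (s + c) - 1"
  define F where "F t = integral {a..t} f" for t
  have int: "f integrable_on {u..v}" for u v
    by (rule integrable_continuous_real[OF continuous_on_subset[OF f]]) simp
  have eq: "(if 0 \<le> r then integral {c..r+c} f else - integral {r+c..c} f) = F (r + c) - F c"
    if "r \<in> {a - c<..}" for r
  proof (cases "0 \<le> r")
    case True
    have "integral {a..c} f + integral {c..r+c} f = integral {a..r+c} f"
      by (rule Henstock_Kurzweil_Integration.integral_combine) (use True in \<open>auto simp: a_def int\<close>)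
    with True show ?thesis by (simp add: F_def)
  next
    case False
    have "integral {a..r+c} f + integral {r+c..c} f = integral {a..c} f"
      by (rule Henstock_Kurzweil_Integration.integral_combine) (use False that in \<open>auto simp: a_def int\<close>)
    with False show ?thesis by (simp add: F_def)
  qed
  have "(F has_real_derivative f (s + c)) (at (s + c) within {a..s+c+1})"
    unfolding F_def by (rule integral_has_real_derivative[OF continuous_on_subset[OF f]]) (auto simp: a_def)
  moreover have "at (s + c) within {a..s+c+1} = at (s + c)"
    by (rule at_within_Icc_at) (auto simp: a_def)
  ultimately have dF: "(F has_real_derivative f (s + c)) (at (s + c))" by simp
  have "((\<lambda>r. F (r + c)) has_real_derivative f (s + c)) (at s)"
    using DERIV_chain2[OF _ DERIV_add[OF DERIV_ident DERIV_const[of c]], OF dF] by simp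
  from DERIV_diff[OF this DERIV_const[of "F c"]]
  have "((\<lambda>r. F (r + c) - F c) has_real_derivative f (s + c)) (at s)" by simp
  then show ?thesis
    by (rule has_field_derivative_transform_within_open[where S = "{a - c<..}"])
      (auto simp: eq a_def)
qed

locale unduloid =
  fixes B H :: real
  assumes B_pos: "0 < B" and B_less_1: "B < 1" and H_pos: "0 < H"
begin

(* D = (H ux)^2; ux', uz', ux'', uz'' are the first and second derivatives of the profile,
   written in terms of cos (H s) via sin (y + 3 pi/2) = - cos y. *)
definition D :: "real \<Rightarrow> real"
  where "D s = 1 + B^2 - 2*B * cos (H * s)"

definition ux' :: "real \<Rightarrow> real"
  where "ux' s = B * sin (H * s) / sqrt (D s)"

definition uz' :: "real \<Rightarrow> real"
  where "uz' s = (1 - B * cos (H * s)) / sqrt (D s)"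

definition ux'' :: "real \<Rightarrow> real"
  where "ux'' s = B*H * (cos (H * s) - B) * (1 - B * cos (H * s)) / (D s * sqrt (D s))"

definition uz'' :: "real \<Rightarrow> real"
  where "uz'' s = B^2*H * sin (H * s) * (B - cos (H * s)) / (D s * sqrt (D s))"

lemma B_cos_le: "B * cos (H * s) \<le> B"
  using B_pos by (simp add: mult_left_le)

lemma D_ge: "D s \<ge> (1 - B)^2"
  using B_cos_le[of s] by (simp add: D_def power2_eq_square algebra_simps)

lemma D_pos: "D s > 0"
proof -
  have "(1 - B)^2 > 0" using B_less_1 by simp
  with D_ge[of s] show ?thesis by linarith
qed

lemma sqrt_D_pos: "sqrt (D s) > 0"
  using D_pos by simp

lemma sqrt_D_sq: "sqrt (D s) * sqrt (D s) = D s"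
  using D_pos[of s] by simp

lemma sqrt_D_sq_expand: "sqrt (D s) * sqrt (D s) = 1 + B^2 - 2*B * cos (H * s)"
  using sqrt_D_sq unfolding D_def .

lemma sqrt_D_deriv: "((\<lambda>s. sqrt (D s)) has_real_derivative B*H * sin (H * s) / sqrt (D s)) (at s)"
  unfolding D_def using D_pos[of s, unfolded D_def]
  by (auto intro!: derivative_eq_intros simp: field_simps)

lemma ux_eq: "ux B H s = sqrt (D s) / H"
  by (simp add: ux_def D_def sin_add_3pi_half)

lemma ux_pos: "ux B H s > 0"
  using sqrt_D_pos H_pos by (simp add: ux_eq)

lemma ux_deriv: "(ux B H has_real_derivative ux' s) (at s)"
proof -
  have "ux B H = (\<lambda>s. sqrt (D s) / H)" using ux_eq by auto
  then show ?thesis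
    using DERIV_cdivide[OF sqrt_D_deriv, where c = H] H_pos by (simp add: ux'_def)
qed

lemma ux'_deriv: "(ux' has_real_derivative ux'' s) (at s)"
  unfolding ux'_def[abs_def]
proof (rule DERIV_divide[OF _ sqrt_D_deriv, THEN DERIV_cong])
  show "((\<lambda>s. B * sin (H * s)) has_real_derivative B*H * cos (H * s)) (at s)"
    by (auto intro!: derivative_eq_intros)
  show "sqrt (D s) \<noteq> 0" using sqrt_D_pos[of s] by simp
  show "(B*H * cos (H * s) * sqrt (D s) - B * sin (H * s) * (B*H * sin (H * s) / sqrt (D s)))
      / (sqrt (D s) * sqrt (D s)) = ux'' s"
    using sqrt_D_pos[of s] by (simp add: ux''_def divide_simps)
      (use sqrt_D_sq_expand[of s] sin_squared_eq[of "H * s"] in algebra)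
qed

lemma uz'_deriv: "(uz' has_real_derivative uz'' s) (at s)"
  unfolding uz'_def[abs_def]
proof (rule DERIV_divide[OF _ sqrt_D_deriv, THEN DERIV_cong])
  show "((\<lambda>s. 1 - B * cos (H * s)) has_real_derivative B*H * sin (H * s)) (at s)"
    by (auto intro!: derivative_eq_intros)
  show "sqrt (D s) \<noteq> 0" using sqrt_D_pos[of s] by simp
  show "(B*H * sin (H * s) * sqrt (D s) - (1 - B * cos (H * s)) * (B*H * sin (H * s) / sqrt (D s)))
      / (sqrt (D s) * sqrt (D s)) = uz'' s"
    using sqrt_D_pos[of s] by (simp add: uz''_def divide_simps)
      (use sqrt_D_sq_expand[of s] in algebra)
qed

lemma uz'_pos: "uz' s > 0"
  using B_cos_le[of s] B_less_1 sqrt_D_pos[of s] by (simp add: uz'_def)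

lemma continuous_uz_integrand: "continuous_on UNIV (uz_integrand B H)"
proof -
  have "1 + B^2 + 2*B * sin (H * t) \<ge> (1 - B)^2" for t
    using mult_left_mono[OF sin_ge_minus_one, of B "H * t"] B_pos
    by (simp add: power2_eq_square algebra_simps)
  moreover have "(1 - B)^2 > 0" using B_less_1 by simp
  ultimately have "1 + B^2 + 2*B * sin (H * t) > 0" for t
    by (meson less_le_trans)
  then show ?thesis
    unfolding uz_integrand_def[abs_def] by (intro continuous_intros) (auto simp: less_imp_neq[symmetric])
qed

lemma uz_integrand_shift: "uz_integrand B H (s + 3*pi/(2*H)) = uz' s"
proof -
  have "H * (s + 3*pi/(2*H)) = H * s + 3*pi/2" using H_pos by (simp add: field_simps)
  then show ?thesis by (simp add: uz_integrand_def uz'_def D_def sin_add_3pi_half)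
qed

lemma uz_deriv: "(uz B H has_real_derivative uz' s) (at s)"
  using oriented_integral_has_real_derivative[OF continuous_uz_integrand, of "3*pi/(2*H)" s]
  by (simp add: uz_def[abs_def] Let_def uz_integrand_shift)

lemma unit_speed: "(ux' s)^2 + (uz' s)^2 = 1"
  using sqrt_D_pos[of s]
  by (simp add: ux'_def uz'_def power_divide divide_simps)
    (use D_def[of s] sin_squared_eq[of "H * s"] in algebra)

sublocale profile: unit_speed_profile "ux B H" "uz B H" ux' uz' ux'' uz''
  by unfold_locales (use ux_deriv uz_deriv ux'_deriv uz'_deriv unit_speed ux_pos in auto)

lemma meridian_curvature_eq: "profile.meridian_curvature s = B*H * (B - cos (H * s)) / D s"
  using sqrt_D_pos[of s] D_pos[of s]
  by (simp add: profile.meridian_curvature_def ux'_def uz'_def ux''_def uz''_def divide_simps)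
    (use D_def[of s] sin_squared_eq[of "H * s"] in algebra)

lemma parallel_curvature_eq: "profile.parallel_curvature s = H * (1 - B * cos (H * s)) / D s"
  using sqrt_D_pos[of s] H_pos sqrt_D_sq[of s]
  by (simp add: profile.parallel_curvature_def uz'_def ux_eq field_simps)

lemma mean_curv_unduloid: "mean_curv (rot_surf (ux B H) (uz B H)) (rot_normal (ux B H) (uz B H)) p = H"
proof (cases p)
  case (Pair s t)
  have "B*H * (B - cos (H * s)) + H * (1 - B * cos (H * s)) = H * D s"
    by (simp add: D_def algebra_simps power2_eq_square)
  then show ?thesis
    using D_pos[of s] by (simp add: Pair profile.mean_curv_rot_surf meridian_curvature_eq
        parallel_curvature_eq add_divide_distrib[symmetric])
qed

lemma Phi_sq_unduloid:
  "Phi_sq (rot_surf (ux B H) (uz B H)) (rot_normal (ux B H) (uz B H)) (s,t)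
     = (H * (1 - B^2) / D s)^2 / 2"
proof -
  have "B*H * (B - cos (H * s)) - H * (1 - B * cos (H * s)) = - (H * (1 - B^2))"
    by (simp add: algebra_simps power2_eq_square)
  then show ?thesis
    by (simp add: profile.Phi_sq_rot_surf meridian_curvature_eq parallel_curvature_eq
        diff_divide_distrib[symmetric])
qed

lemma ux_even: "ux B H (- s) = ux B H s"
  by (simp add: ux_eq D_def)

lemma ux'_odd: "ux' (- s) = - ux' s"
  by (simp add: ux'_def D_def)

lemma uz'_even: "uz' (- s) = uz' s"
  by (simp add: uz'_def D_def)

lemma uz_0: "uz B H 0 = 0"
  by (simp add: uz_def)

lemma uz_odd: "uz B H (- s) = - uz B H s"
proof -
  have "((\<lambda>r. uz B H r + uz B H (- r)) has_real_derivative 0) (at r)" for r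
    using DERIV_add[OF uz_deriv DERIV_chain2[OF uz_deriv DERIV_minus[OF DERIV_ident]]]
    by (simp add: uz'_even)
  from DERIV_isconst_all[of "\<lambda>r. uz B H r + uz B H (- r)" s 0, OF allI[OF this]]
  show ?thesis by (simp add: uz_0)
qed

lemma strict_mono_uz: "strict_mono (uz B H)"
  by (rule strict_monoI, rule DERIV_pos_imp_increasing) (use uz_deriv uz'_pos in blast)+

lemma uz_pos: "s > 0 \<Longrightarrow> uz B H s > 0"
  using strict_monoD[OF strict_mono_uz, of 0 s] by (simp add: uz_0)

lemma support_even: "profile.support (- s) = profile.support s"
  by (simp add: profile.support_def ux_even uz'_even ux'_odd uz_odd)

lemma ug_eq_support: "ug B H s = profile.support s / uz' s"
  using uz'_pos[of s]
  by (simp add: ug_def profile.support_def DERIV_imp_deriv[OF ux_deriv] DERIV_imp_deriv[OF uz_deriv]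
      field_simps)

lemma arccos_B: "0 < arccos B" "arccos B < pi" "cos (arccos B) = B"
  using arccos_lt_bounded[of B] B_pos B_less_1 by auto

lemma sin_cos_before_arccos:
  assumes "0 < s" "s \<le> arccos B / H"
  shows "sin (H * s) > 0" "B \<le> cos (H * s)" "s < arccos B / H \<Longrightarrow> B < cos (H * s)"
proof -
  have Hs: "0 < H * s" "H * s \<le> arccos B" using assms H_pos by (auto simp: field_simps)
  then show "sin (H * s) > 0" using arccos_B by (intro sin_gt_zero) auto
  show "B \<le> cos (H * s)" using cos_monotone_0_pi_le[of "H * s" "arccos B"] Hs arccos_B by simp
  assume "s < arccos B / H"
  then have "H * s < arccos B" using H_pos by (simp add: field_simps)
  then show "B < cos (H * s)" using cos_monotone_0_pi[of "H * s" "arccos B"] Hs arccos_B by simp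
qed

lemma support_deriv_neg:
  assumes "0 < s" "s < arccos B / H"
  shows "ux B H s * uz'' s - ux'' s * uz B H s < 0"
proof -
  have arc: "sin (H * s) > 0" "B < cos (H * s)"
    using sin_cos_before_arccos[OF assms(1) less_imp_le[OF assms(2)]] assms(2) by auto
  have "B * cos (H * s) < 1" using B_cos_le B_less_1 by (rule order.strict_trans1)
  have "uz'' s < 0"
    using arc B_pos H_pos D_pos[of s] sqrt_D_pos[of s]
    unfolding uz''_def by (intro divide_neg_pos mult_pos_neg mult_pos_pos) auto
  with ux_pos[of s] have "ux B H s * uz'' s < 0" by (rule mult_pos_neg)
  have "ux'' s > 0"
    using arc \<open>B * cos (H * s) < 1\<close> B_pos H_pos D_pos[of s] sqrt_D_pos[of s]
    unfolding ux''_def by (intro divide_pos_pos mult_pos_pos) auto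
  then have "ux'' s * uz B H s > 0" using uz_pos[OF assms(1)] by (rule mult_pos_pos)
  with \<open>ux B H s * uz'' s < 0\<close> show ?thesis by linarith
qed

lemma support_strict_antimono:
  assumes "0 \<le> a" "a < b" "b \<le> arccos B / H"
  shows "profile.support b < profile.support a"
proof (rule DERIV_neg_imp_decreasing_open[OF assms(2) _ profile.continuous_on_support])
  fix s assume "a < s" "s < b"
  with assms have "0 < s" "s < arccos B / H" by auto
  then show "\<exists>y. (profile.support has_real_derivative y) (at s) \<and> y < 0"
    using profile.support_deriv support_deriv_neg by blast
qed

lemma radius_sq_strict_mono:
  assumes "0 \<le> a" "a < b" "b \<le> arccos B / H"
  shows "(ux B H a)^2 + (uz B H a)^2 < (ux B H b)^2 + (uz B H b)^2"
proof (rule DERIV_pos_imp_increasing_open[OF assms(2) _ profile.continuous_on_radius_sq])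
  fix s assume "a < s" "s < b"
  with assms have s: "0 < s" "s < arccos B / H" by auto
  have "ux' s > 0"
    using sin_cos_before_arccos(1)[OF s(1) less_imp_le[OF s(2)]] B_pos sqrt_D_pos[of s] by (simp add: ux'_def)
  then have "2 * (ux B H s * ux' s + uz B H s * uz' s) > 0"
    using ux_pos[of s] uz_pos[OF s(1)] uz'_pos[of s] by (simp add: add_pos_pos)
  then show "\<exists>y. ((\<lambda>s. (ux B H s)^2 + (uz B H s)^2) has_real_derivative y) (at s) \<and> 0 < y"
    using profile.radius_sq_deriv by blast
qed

lemma support_0: "profile.support 0 = (1 - B) / H"
proof -
  have "D 0 = (1 - B)^2" by (simp add: D_def power2_eq_square algebra_simps)
  then have "sqrt (D 0) = 1 - B" using B_less_1 by simp
  then show ?thesis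
    using B_less_1 H_pos by (simp add: profile.support_def ux_eq uz'_def uz_0)
qed

lemma support_at_arccos:
  "profile.support (arccos B / H) = (1 - B^2) / H - B * uz B H (arccos B / H)"
proof -
  define s0 where "s0 = arccos B / H"
  define r where "r = sqrt (1 - B^2)"
  have r: "r > 0" "r * r = 1 - B^2"
    using B_pos B_less_1 by (simp_all add: r_def abs_square_less_1 abs_square_le_1 less_imp_le)
  have "H * s0 = arccos B" using H_pos by (simp add: s0_def)
  then have cs: "cos (H * s0) = B" "sin (H * s0) = r"
    using arccos_B B_pos B_less_1 by (simp_all add: r_def sin_arccos)
  then have "sqrt (D s0) = r" by (simp add: D_def r_def power2_eq_square)
  then have "ux B H s0 = r / H" "uz' s0 = r" "ux' s0 = B"
    using r unfolding ux_eq uz'_def ux'_def cs by (simp_all add: field_simps power2_eq_square)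
  then show ?thesis
    using r H_pos by (simp add: profile.support_def s0_def[symmetric])
qed

lemma support_pos_iff:
  "profile.support (arccos B / H) > 0 \<longleftrightarrow> uz B H (arccos B / H) < (1 - B^2) / (H * B)"
  using B_pos H_pos by (simp add: support_at_arccos field_simps)

lemma ug_pos_before_arccos:
  assumes "uz B H (arccos B / H) < (1 - B^2) / (H * B)" "0 < s" "s < arccos B / H"
  shows "ug B H s > 0"
proof -
  have "0 < profile.support (arccos B / H)" using assms(1) support_pos_iff by simp
  also have "\<dots> < profile.support s" using assms(2,3) by (intro support_strict_antimono) auto
  finally show ?thesis using uz'_pos[of s] by (simp add: ug_eq_support)
qed

lemma support_zero_exists:
  assumes "uz B H (arccos B / H) \<ge> (1 - B^2) / (H * B)"
  shows "\<exists>sb\<in>{0<..arccos B / H}. profile.support sb = 0"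
proof -
  have "profile.support (arccos B / H) \<le> 0" using assms support_pos_iff by simp
  moreover have "profile.support 0 > 0" using B_less_1 H_pos by (simp add: support_0)
  moreover have "0 \<le> arccos B / H" using arccos_B H_pos by simp
  ultimately obtain sb where "0 \<le> sb" "sb \<le> arccos B / H" "profile.support sb = 0"
    using IVT2'[of profile.support "arccos B / H" 0 0, OF _ _ _ profile.continuous_on_support]
    by auto
  moreover from this have "sb \<noteq> 0" using \<open>profile.support 0 > 0\<close> by auto
  ultimately show ?thesis by auto
qed

lemma support_bounds:
  assumes "sb \<le> arccos B / H" "profile.support sb = 0" "\<bar>s\<bar> \<le> sb"
  shows "0 \<le> profile.support s" "profile.support s \<le> (1 - B) / H"
proof -
  have even: "profile.support s = profile.support \<bar>s\<bar>"
    by (cases "0 \<le> s") (simp_all add: support_even)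
  have antimono: "profile.support b \<le> profile.support a" if "0 \<le> a" "a \<le> b" "b \<le> sb" for a b
    using support_strict_antimono[of a b] that assms(1) by (cases "a = b") auto
  show "0 \<le> profile.support s" using antimono[of "\<bar>s\<bar>" sb] assms by (simp add: even)
  show "profile.support s \<le> (1 - B) / H" using antimono[of 0 "\<bar>s\<bar>"] assms by (simp add: even support_0)
qed

lemma free_boundary_annulus:
  assumes "0 < sb" "sb \<le> arccos B / H" "profile.support sb = 0"
  shows "free_boundary_CMC_annulus (rot_surf (ux B H) (uz B H)) (rot_normal (ux B H) (uz B H)) H
           (- sb) sb (sqrt ((ux B H sb)^2 + (uz B H sb)^2))"
  unfolding free_boundary_CMC_annulus_def
proof (intro conjI ballI allI)
  show "- sb < sb" "sqrt ((ux B H sb)^2 + (uz B H sb)^2) > 0"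
    using assms(1) ux_pos[of sb] by (auto intro: add_pos_nonneg)
  show "inj_on (rot_surf (ux B H) (uz B H)) ({- sb..sb} \<times> {0..<2 * pi})"
    using strict_mono_uz by (intro profile.inj_on_rot_surf strict_mono_imp_inj_on)
  fix s t
  show "rot_surf (ux B H) (uz B H) (s, t + 2*pi) = rot_surf (ux B H) (uz B H) (s, t)"
    by (rule rot_surf_periodic)
  show "C2_at (rot_surf (ux B H) (uz B H)) (s, t)" by (rule profile.C2_at_rot_surf)
  show "cross3 (dS (rot_surf (ux B H) (uz B H)) (s, t)) (dT (rot_surf (ux B H) (uz B H)) (s, t)) \<noteq> 0"
    by (rule profile.cross3_rot_surf_nonzero)
  show "norm (rot_normal (ux B H) (uz B H) (s, t)) = 1" by (rule profile.norm_rot_normal)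
  show "rot_normal (ux B H) (uz B H) (s, t) \<bullet> dS (rot_surf (ux B H) (uz B H)) (s, t) = 0"
    "rot_normal (ux B H) (uz B H) (s, t) \<bullet> dT (rot_surf (ux B H) (uz B H)) (s, t) = 0"
    by (rule profile.rot_normal_orthogonal)+
  show "mean_curv (rot_surf (ux B H) (uz B H)) (rot_normal (ux B H) (uz B H)) (s, t) = H"
    by (rule mean_curv_unduloid)
next
  fix s t assume "s \<in> {- sb<..<sb}"
  then have "(ux B H \<bar>s\<bar>)^2 + (uz B H \<bar>s\<bar>)^2 < (ux B H sb)^2 + (uz B H sb)^2"
    using assms(2) by (intro radius_sq_strict_mono) auto
  moreover have "(ux B H \<bar>s\<bar>)^2 + (uz B H \<bar>s\<bar>)^2 = (ux B H s)^2 + (uz B H s)^2"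
    by (cases "0 \<le> s") (simp_all add: ux_even uz_odd)
  ultimately show "norm (rot_surf (ux B H) (uz B H) (s, t)) < sqrt ((ux B H sb)^2 + (uz B H sb)^2)"
    by (simp add: profile.norm_rot_surf)
next
  fix s t assume "s \<in> {- sb, sb}"
  then show "norm (rot_surf (ux B H) (uz B H) (s, t)) = sqrt ((ux B H sb)^2 + (uz B H sb)^2)"
    "rot_surf (ux B H) (uz B H) (s, t) \<bullet> rot_normal (ux B H) (uz B H) (s, t) = 0"
    using assms(3) by (auto simp: profile.norm_rot_surf profile.inner_rot_surf_rot_normal
        ux_even uz_odd support_even)
qed

lemma pinching_bound:
  assumes "0 \<le> w" "w \<le> 1 - B"
  shows "((1 - B^2) * w / D s)^2 \<le> (2 - w)^2"
proof -
  have "(1 - B^2) * w \<le> (1 - B)^2 * (2 - w)"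
  proof -
    have "(1 - B)^2 * (2 - w) - (1 - B^2) * w = 2 * (1 - B) * (1 - B - w)"
      by (simp add: power2_eq_square algebra_simps)
    also have "\<dots> \<ge> 0" using assms B_less_1 by simp
    finally show ?thesis by simp
  qed
  also have "\<dots> \<le> D s * (2 - w)" using assms B_pos D_ge[of s] by (intro mult_right_mono) auto
  finally have "(1 - B^2) * w / D s \<le> 2 - w" using D_pos[of s] by (simp add: divide_simps mult.commute)
  moreover have "0 \<le> (1 - B^2) * w / D s"
    using assms B_pos B_less_1 D_pos[of s] by (simp add: abs_square_le_1)
  ultimately show ?thesis by (rule power_mono)
qed

lemma pinching_unduloid:
  assumes "sb \<le> arccos B / H" "profile.support sb = 0" "s \<in> {- sb..sb}"
  defines "X \<equiv> rot_surf (ux B H) (uz B H)" and "N \<equiv> rot_normal (ux B H) (uz B H)"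
  shows "Phi_sq X N (s, t) * (X (s, t) \<bullet> N (s, t))^2 \<le> (1/2) * (2 + H * (X (s, t) \<bullet> N (s, t)))^2"
proof -
  define w where "w = H * profile.support s"
  have "0 \<le> w" "w \<le> 1 - B"
    using support_bounds[OF assms(1,2)] assms(3) H_pos by (auto simp: w_def field_simps)
  then have "((1 - B^2) * w / D s)^2 / 2 \<le> (2 - w)^2 / 2" using pinching_bound by simp
  moreover have "Phi_sq X N (s, t) * (X (s, t) \<bullet> N (s, t))^2 = ((1 - B^2) * w / D s)^2 / 2"
    by (simp add: X_def N_def Phi_sq_unduloid profile.inner_rot_surf_rot_normal w_def
        power2_eq_square field_simps)
  moreover have "(1/2) * (2 + H * (X (s, t) \<bullet> N (s, t)))^2 = (2 - w)^2 / 2"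
    by (simp add: X_def N_def profile.inner_rot_surf_rot_normal w_def)
  ultimately show ?thesis by simp
qed

end

theorem proposition3p4:
  fixes B H :: real
  assumes "0 < B" "B < 1" "0 < H"
  defines "s0 \<equiv> arccos B / H"
      and "z0 \<equiv> (1 - B^2) / (H * B)"
  shows "(uz B H s0 < z0 \<longrightarrow> (\<forall>s\<in>{0<..<s0}. ug B H s > 0))
       \<and> (uz B H s0 \<ge> z0 \<longrightarrow>
           (\<exists>sb\<in>{0<..s0}. ug B H sb = 0 \<and> ug B H (- sb) = 0 \<and>
              (let R0 = sqrt ((ux B H sb)^2 + (uz B H sb)^2);
                   X = rot_surf (ux B H) (uz B H);
                   N = rot_normal (ux B H) (uz B H) in
               free_boundary_CMC_annulus X N H (- sb) sb R0 \<and>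
               (\<forall>s\<in>{-sb..sb}. \<forall>\<theta>.
                  Phi_sq X N (s,\<theta>) * (X (s,\<theta>) \<bullet> N (s,\<theta>))^2
                    \<le> (1/2) * (2 + H * (X (s,\<theta>) \<bullet> N (s,\<theta>)))^2))))"
proof -
  interpret unduloid B H using assms by unfold_locales
  have "\<forall>s\<in>{0<..<s0}. ug B H s > 0" if "uz B H s0 < z0"
    using ug_pos_before_arccos that by (simp add: s0_def z0_def)
  moreover have "\<exists>sb\<in>{0<..s0}. ug B H sb = 0 \<and> ug B H (- sb) = 0 \<and> profile.support sb = 0"
    if "uz B H s0 \<ge> z0"
    using support_zero_exists that by (auto simp: ug_eq_support support_even s0_def z0_def)
  moreover note free_boundary_annulus pinching_unduloid
  ultimately show ?thesis
    unfolding Let_def s0_def Bex_def greaterThanAtMost_iff by blast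
qed

end
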